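(* Let $G$ be a finite simple graph and $v$ a vertex of $G$ of degree $d$. Then \[-d\le \mathrm{mur}(G)-\mathrm{mur}(G\setminus\{v\})\le d+2,\] where $G\setminus\{v\}$ is the graph obtained from $G$ by deleting $v$ and its incident edges.
   Context: For a finite simple undirected graph $G$ on vertices $v_1,\dots,v_n$, let $A_G$ be its $(0,1)$-adjacency matrix, $D_G=\mathrm{diag}(d_1,\dots,d_n)$ with $d_i$ the degree of $v_i$, $I$ the $n\times n$ identity matrix and $J$ the $n\times n$ all-ones matrix. A universal adjacency matrix of $G$ is any matrix $\alpha A_G+\beta I+\gamma J+\delta D_G$ with real scalars $\alpha,\beta,\gamma,\delta$ and $\alpha\neq 0$. The minimum universal rank $\mathrm{mur}(G)$ is the minimum rank over all universal adjacency matrices of $G$. *)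

theory Defs
  imports "Jordan_Normal_Form.DL_Rank"
begin

text \<open>Vertices are of a linearly ordered
  type so that they can be enumerated (sorted) to index matrix rows/columns;
  rank does not depend on this enumeration.\<close>

definition simple_graph :: "'a set \<Rightarrow> ('a \<Rightarrow> 'a \<Rightarrow> bool) \<Rightarrow> bool" where
  "simple_graph V E \<longleftrightarrow> finite V \<and> (\<forall>x y. E x y \<longrightarrow> x \<in> V \<and> y \<in> V)
     \<and> (\<forall>x y. E x y \<longrightarrow> E y x) \<and> (\<forall>x. \<not> E x x)"

definition degree :: "'a set \<Rightarrow> ('a \<Rightarrow> 'a \<Rightarrow> bool) \<Rightarrow> 'a \<Rightarrow> nat" where
  "degree V E x = card {u \<in> V. E x u}"

definition univ_adj_matrix ::
  "('a::linorder) set \<Rightarrow> ('a \<Rightarrow> 'a \<Rightarrow> bool) \<Rightarrow> real \<Rightarrow> real \<Rightarrow> real \<Rightarrow> real \<Rightarrow> real mat" where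
  "univ_adj_matrix V E \<alpha> \<beta> \<gamma> \<delta> =
     (let vs = sorted_list_of_set V in
      mat (card V) (card V) (\<lambda>(i, j).
        \<alpha> * (if E (vs ! i) (vs ! j) then 1 else 0)
        + \<beta> * (if i = j then 1 else 0)
        + \<gamma>
        + \<delta> * (if i = j then real (degree V E (vs ! i)) else 0)))"

definition mur :: "('a::linorder) set \<Rightarrow> ('a \<Rightarrow> 'a \<Rightarrow> bool) \<Rightarrow> nat" where
  "mur V E = Min {vec_space.rank (card V) (univ_adj_matrix V E \<alpha> \<beta> \<gamma> \<delta>)
                   | \<alpha> \<beta> \<gamma> \<delta>. \<alpha> \<noteq> 0}"

definition del_vertex_V :: "'a set \<Rightarrow> 'a \<Rightarrow> 'a set" where
  "del_vertex_V V v = V - {v}"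

definition del_vertex_E :: "('a \<Rightarrow> 'a \<Rightarrow> bool) \<Rightarrow> 'a \<Rightarrow> 'a \<Rightarrow> 'a \<Rightarrow> bool" where
  "del_vertex_E E v = (\<lambda>x y. E x y \<and> x \<noteq> v \<and> y \<noteq> v)"

end

theory Submission
  imports Defs
begin

text \<open>Fix the parameters of a universal adjacency matrix M of G and let M' be the matrix
  of G - v with the same parameters. Deleting the row and column of v from M leaves M'
  plus \<delta> times the 0/1 diagonal matrix marking the neighbours of v, whose rank is at
  most d. Deleting one row and one column never raises the rank and lowers it by at
  most 2. Applied to a rank-minimising matrix of G, resp. of G - v, this bounds
  mur(G - v) by mur(G) + d, resp. mur(G) by mur(G - v) + d + 2.\<close>

context vec_space begin

lemma rank_le_of_cols_subset_span:
  assumes A: "A \<in> carrier_mat n a" and B: "B \<in> carrier_mat n b"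
    and sub: "set (cols A) \<subseteq> span (set (cols B))"
  shows "rank A \<le> rank B"
proof -
  define W where "W = span (set (cols B))"
  have cB: "set (cols B) \<subseteq> carrier_vec n" using B cols_dim by blast
  have cA: "set (cols A) \<subseteq> carrier_vec n" using A cols_dim by blast
  have sW: "subspace class_ring W V" unfolding W_def using span_is_subspace cB by auto
  have "span (set (cols A)) \<subseteq> W"
    using sub unfolding W_def by (simp add: cB span_is_subset span_is_submodule)
  moreover have "subspace class_ring (span (set (cols A))) V" using span_is_subspace cA by auto
  ultimately have sub_W: "subspace class_ring (span (set (cols A))) (vs W)"
    using nested_subspaces sW by blast
  have "vectorspace.fin_dim class_ring (vs W)"
    unfolding W_def using fin_dim_span_cols B by blast
  moreover have "vectorspace.fin_dim class_ring (span_vs (set (cols A)))"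
    using fin_dim_span_cols A by blast
  ultimately show ?thesis unfolding rank_def W_def[symmetric]
    using vectorspace.subspace_dim[OF subspace_is_vs[OF sW] sub_W] by auto
qed

lemma rank_mult_le_left:
  assumes A: "A \<in> carrier_mat n k" and B: "B \<in> carrier_mat k m"
  shows "rank (A * B) \<le> rank A"
proof (rule rank_le_of_cols_subset_span[OF mult_carrier_mat[OF A B] A], rule subsetI)
  fix x assume "x \<in> set (cols (A * B))"
  then obtain j where j: "j < m" and x: "x = col (A * B) j"
    using A B by (auto simp: in_set_conv_nth)
  have "x = A *\<^sub>v col B j" unfolding x using col_mult2[OF A B j] .
  moreover have "col B j \<in> carrier_vec (dim_col A)" using A B j by simp
  moreover have "A *\<^sub>v col B j \<in> carrier_vec (dim_row A)" unfolding carrier_vec_def by simp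
  ultimately show "x \<in> span (set (cols A))"
    unfolding col_space_def[symmetric] col_space_eq[OF A] by blast
qed

lemma mat_of_cols_factorization:
  assumes xs: "set xs \<subseteq> carrier_vec n" "distinct xs" and A: "A \<in> carrier_mat n m"
    and sub: "set (cols A) \<subseteq> span (set xs)"
  obtains C where "C \<in> carrier_mat (length xs) m" and "A = mat_of_cols n xs * C"
proof -
  have "col A j \<in> span (set xs)" if "j < m" for j using sub A that by (auto simp: cols_def)
  then have "\<exists>a. lincomb a (set xs) = col A j" if "j < m" for j
    using finite_in_span[OF _ xs(1)] that by blast
  then obtain a where a: "\<And>j. j < m \<Longrightarrow> lincomb (a j) (set xs) = col A j" by metis
  define B where "B = mat_of_cols n xs"
  define C where "C = mat (length xs) m (\<lambda>(i, j). a j (xs ! i))"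
  have B: "B \<in> carrier_mat n (length xs)" and cols_B: "cols B = xs"
    unfolding B_def using xs(1) by auto
  have C: "C \<in> carrier_mat (length xs) m" unfolding C_def by simp
  have "col A j = col (B * C) j" if j: "j < m" for j
  proof -
    have "col B i = xs ! i" if "i < length xs" for i
      using cols_B B that by (metis cols_nth carrier_matD(2))
    then have "col C j = vec (length xs) (\<lambda>i. a j (col B i))"
      using j unfolding C_def by auto
    then have "col (B * C) j = lincomb (a j) (set xs)"
      using col_mult2[OF B C j] mat_mult_eq_lincomb[OF B] cols_B xs(2) by simp
    then show ?thesis using a[OF j] by simp
  qed
  then have "A = B * C" using A B C by (auto intro!: mat_col_eqI)
  then show thesis using that C unfolding B_def by blast
qed

lemma rank_factorization:
  assumes A: "A \<in> carrier_mat n m"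
  obtains B C where "B \<in> carrier_mat n (rank A)" and "C \<in> carrier_mat (rank A) m" and "A = B * C"
proof -
  define W where "W = span (set (cols A))"
  have cA: "set (cols A) \<subseteq> carrier_vec n" using A cols_dim by blast
  have smW: "submodule class_ring W V" unfolding W_def using span_is_submodule cA by auto
  have vsW: "vectorspace class_ring (vs W)"
    unfolding W_def using subspace_is_vs span_is_subspace cA by auto
  obtain \<beta> where fin: "finite \<beta>" and bas: "vectorspace.basis class_ring (vs W) \<beta>"
    using vectorspace.finite_basis_exists[OF vsW] fin_dim_span_cols[OF A] unfolding W_def by blast
  have rank: "rank A = card \<beta>"
    unfolding rank_def W_def[symmetric] using vectorspace.dim_basis[OF vsW fin bas] .
  have \<beta>W: "\<beta> \<subseteq> W" and "LinearCombinations.module.span class_ring (vs W) \<beta> = W"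
    using bas unfolding vectorspace.basis_def[OF vsW] by auto
  then have span_\<beta>: "span \<beta> = W" using span_li_not_depend(1)[OF \<beta>W smW] by simp
  obtain xs where xs: "set xs = \<beta>" "distinct xs" using finite_distinct_list[OF fin] by blast
  have "set xs \<subseteq> carrier_vec n" using xs \<beta>W submodule.subset[OF smW] by auto
  moreover have "set (cols A) \<subseteq> span (set xs)"
    using span_mem[OF cA] span_\<beta> xs unfolding W_def by auto
  ultimately obtain C where "C \<in> carrier_mat (length xs) m" "A = mat_of_cols n xs * C"
    using mat_of_cols_factorization[OF _ xs(2) A] by blast
  moreover have "length xs = rank A" using rank xs distinct_card by metis
  ultimately show thesis using that mat_of_cols_carrier by metis
qed

end

text \<open>Rank is defined through the column space, so row operations are handled by
  pushing them into the left factor of a rank factorisation.\<close>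

lemma rank_reindex_le:
  fixes A :: "'a::field mat"
  assumes A: "A \<in> carrier_mat n n'"
    and f: "\<And>i. i < m \<Longrightarrow> u i \<noteq> 0 \<Longrightarrow> f i < n"
    and g: "\<And>j. j < m' \<Longrightarrow> w j \<noteq> 0 \<Longrightarrow> g j < n'"
  shows "vec_space.rank m (mat m m' (\<lambda>(i, j). u i * w j * A $$ (f i, g j))) \<le> vec_space.rank n A"
proof -
  define r where "r = vec_space.rank n A"
  obtain B C where B: "B \<in> carrier_mat n r" and C: "C \<in> carrier_mat r n'" and A_BC: "A = B * C"
    using vec_space.rank_factorization[OF A] unfolding r_def by blast
  define B' where "B' = mat m r (\<lambda>(i, l). u i * B $$ (f i, l))"
  define C' where "C' = mat r m' (\<lambda>(l, j). w j * C $$ (l, g j))"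
  have B': "B' \<in> carrier_mat m r" and C': "C' \<in> carrier_mat r m'" unfolding B'_def C'_def by auto
  have "mat m m' (\<lambda>(i, j). u i * w j * A $$ (f i, g j)) = B' * C'"
  proof (rule eq_matI)
    fix i j assume "i < dim_row (B' * C')" and "j < dim_col (B' * C')"
    then have i: "i < m" and j: "j < m'" using B' C' by auto
    have "(B' * C') $$ (i, j) = u i * w j * (\<Sum>l<r. B $$ (f i, l) * C $$ (l, g j))"
      using i j B' C' unfolding B'_def C'_def
      by (simp add: scalar_prod_def atLeast0LessThan sum_distrib_left algebra_simps)
    also have "\<dots> = u i * w j * A $$ (f i, g j)"
    proof (cases "u i = 0 \<or> w j = 0")
      case False
      then have "f i < n" and "g j < n'" using f[OF i] g[OF j] by auto
      then show ?thesis using B C unfolding A_BC by (simp add: scalar_prod_def atLeast0LessThan)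
    qed auto
    finally show "mat m m' (\<lambda>(i, j). u i * w j * A $$ (f i, g j)) $$ (i, j) = (B' * C') $$ (i, j)"
      using i j by simp
  qed (use B' C' in auto)
  also have "vec_space.rank m (B' * C') \<le> r"
    using vec_space.rank_mult_le_left[OF B' C'] vec_space.rank_le_nc[OF B'] by linarith
  finally show ?thesis unfolding r_def .
qed

lemma rank_mat_delete_le:
  fixes A :: "'a::field mat"
  assumes A: "A \<in> carrier_mat n m"
  shows "vec_space.rank (n - 1) (mat_delete A i j) \<le> vec_space.rank n A"
proof -
  have "mat_delete A i j = mat (n - 1) (m - 1)
      (\<lambda>(k, l). 1 * 1 * A $$ (insert_index i k, insert_index j l))"
    using A unfolding mat_delete_def insert_index_def by auto
  also have "vec_space.rank (n - 1) \<dots> \<le> vec_space.rank n A"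
    by (rule rank_reindex_le[OF A]) (auto simp: insert_index_def)
  finally show ?thesis .
qed

lemma rank_le_card_nonzero_rows:
  fixes D :: "'a::field mat"
  assumes "finite S" and "D \<in> carrier_mat n m"
    and "\<And>i j. i < n \<Longrightarrow> j < m \<Longrightarrow> i \<notin> S \<Longrightarrow> D $$ (i, j) = 0"
  shows "vec_space.rank n D \<le> card S"
  using assms
proof (induction S arbitrary: D rule: finite_induct)
  case empty
  then have "D = 0\<^sub>m n m" by (auto intro!: eq_matI)
  then show ?case using vec_space.rank_0I by simp
next
  case (insert x S)
  define D1 where "D1 = mat n m (\<lambda>(i, j). if i = x then 0 else D $$ (i, j))"
  define D2 where "D2 = mat n m (\<lambda>(i, j). (if i = x then 1 else 0) * D $$ (x, j))"
  have D1: "D1 \<in> carrier_mat n m" and D2: "D2 \<in> carrier_mat n m" unfolding D1_def D2_def by auto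
  have "D = D1 + D2" using insert.prems(1) unfolding D1_def D2_def by (auto intro!: eq_matI)
  then have "vec_space.rank n D \<le> vec_space.rank n D1 + vec_space.rank n D2"
    using vec_space.rank_subadditive[OF D1 D2] by simp
  moreover have "vec_space.rank n D1 \<le> card S"
    using insert.IH[OF D1] insert.prems(2) unfolding D1_def by auto
  moreover have "vec_space.rank n D2 \<le> 1"
    by (rule vec_space.rank_le_1_product_entries[OF D2, of "\<lambda>i. if i = x then 1 else 0" "\<lambda>j. D $$ (x, j)"])
      (auto simp: D2_def)
  ultimately show ?case using insert.hyps by simp
qed

lemma rank_le_rank_mat_delete_add_2:
  fixes A :: "'a::field mat"
  assumes A: "A \<in> carrier_mat n m" and i: "i < n" and j: "j < m"
  shows "vec_space.rank n A \<le> vec_space.rank (n - 1) (mat_delete A i j) + 2"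
proof -
  define A' where "A' = mat_delete A i j"
  have A': "A' \<in> carrier_mat (n - 1) (m - 1)" unfolding A'_def using mat_delete_carrier[OF A] .
  \<comment> \<open>A splits as: A with row i and column j cleared, plus row i, plus the rest of column j.\<close>
  define X where "X = mat n m (\<lambda>(a, b). (if a = i then 0 else 1) * (if b = j then 0 else 1)
      * A' $$ (delete_index i a, delete_index j b))"
  define Y where "Y = mat n m (\<lambda>(a, b). (if a = i then 1 else 0) * A $$ (i, b))"
  define Z where "Z = mat n m (\<lambda>(a, b). (if a = i then 0 else A $$ (a, j)) * (if b = j then 1 else 0))"
  have X: "X \<in> carrier_mat n m" and Y: "Y \<in> carrier_mat n m" and Z: "Z \<in> carrier_mat n m"
    unfolding X_def Y_def Z_def by auto
  have "A = X + Y + Z"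
  proof (rule eq_matI)
    fix a b assume "a < dim_row (X + Y + Z)" and "b < dim_col (X + Y + Z)"
    then have a: "a < n" and b: "b < m" using Z by auto
    have "a \<noteq> i \<Longrightarrow> b \<noteq> j \<Longrightarrow> A' $$ (delete_index i a, delete_index j b) = A $$ (a, b)"
      using A a b i j unfolding A'_def mat_delete_def delete_index_def by auto
    then show "A $$ (a, b) = (X + Y + Z) $$ (a, b)"
      using a b X Y Z unfolding X_def Y_def Z_def by auto
  qed (use A X Y Z in auto)
  then have "vec_space.rank n A \<le> vec_space.rank n X + vec_space.rank n Y + vec_space.rank n Z"
    using vec_space.rank_subadditive[OF add_carrier_mat[OF Y, of X] Z]
      vec_space.rank_subadditive[OF X Y] by simp
  moreover have "vec_space.rank n X \<le> vec_space.rank (n - 1) A'"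
    unfolding X_def by (rule rank_reindex_le[OF A']) (use i j in \<open>auto simp: delete_index_def split: if_splits\<close>)
  moreover have "vec_space.rank n Y \<le> 1"
    by (rule vec_space.rank_le_1_product_entries[OF Y, of "\<lambda>a. if a = i then 1 else 0" "\<lambda>b. A $$ (i, b)"])
      (auto simp: Y_def)
  moreover have "vec_space.rank n Z \<le> 1"
    by (rule vec_space.rank_le_1_product_entries[OF Z, of "\<lambda>a. if a = i then 0 else A $$ (a, j)"
        "\<lambda>b. if b = j then 1 else 0"]) (auto simp: Z_def)
  ultimately show ?thesis unfolding A'_def by linarith
qed

lemma nth_remove1_nth:
  assumes "distinct xs" and "p < length xs" and "k < length xs - 1"
  shows "remove1 (xs ! p) xs ! k = xs ! insert_index p k"
proof -
  have split: "xs = take p xs @ xs ! p # drop (Suc p) xs" using assms(2) by (rule id_take_nth_drop)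
  have "xs ! p \<notin> set (take p xs)" using assms(1,2) by (auto simp: in_set_conv_nth nth_eq_iff_index_eq)
  then have "remove1 (xs ! p) xs = take p xs @ drop (Suc p) xs"
    by (subst split) (simp add: remove1_append)
  then show ?thesis using assms(2,3) by (auto simp: insert_index_def nth_append)
qed

lemma dim_univ_adj_matrix [simp]:
  "dim_row (univ_adj_matrix V E \<alpha> \<beta> \<gamma> \<delta>) = card V"
  "dim_col (univ_adj_matrix V E \<alpha> \<beta> \<gamma> \<delta>) = card V"
  unfolding univ_adj_matrix_def Let_def by simp_all

lemma univ_adj_matrix_carrier: "univ_adj_matrix V E \<alpha> \<beta> \<gamma> \<delta> \<in> carrier_mat (card V) (card V)"
  by (simp add: carrier_matI)

lemma univ_adj_matrix_index:
  assumes "a < card V" and "b < card V"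
  shows "univ_adj_matrix V E \<alpha> \<beta> \<gamma> \<delta> $$ (a, b) =
    \<alpha> * (if E (sorted_list_of_set V ! a) (sorted_list_of_set V ! b) then 1 else 0)
    + \<beta> * (if a = b then 1 else 0) + \<gamma>
    + \<delta> * (if a = b then real (degree V E (sorted_list_of_set V ! a)) else 0)"
  using assms unfolding univ_adj_matrix_def Let_def by simp

lemma degree_del_vertex:
  assumes G: "simple_graph V E" and "u \<noteq> v"
  shows "degree V E u = degree (del_vertex_V V v) (del_vertex_E E v) u + (if E u v then 1 else 0)"
proof -
  have fin: "finite {w \<in> V. E u w}" using G unfolding simple_graph_def by simp
  have nbrs: "{w \<in> del_vertex_V V v. del_vertex_E E v u w} = {w \<in> V. E u w} - {v}"
    using assms(2) unfolding del_vertex_V_def del_vertex_E_def by auto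
  have "E u v \<longleftrightarrow> v \<in> {w \<in> V. E u w}" using G unfolding simple_graph_def by auto
  then show ?thesis unfolding degree_def nbrs using card.remove[OF fin] by auto
qed

lemma mat_delete_univ_adj_matrix:
  fixes V :: "'a::linorder set"
  assumes G: "simple_graph V E" and p: "p < card V" "sorted_list_of_set V ! p = v"
  defines "vs' \<equiv> sorted_list_of_set (del_vertex_V V v)"
  shows "mat_delete (univ_adj_matrix V E \<alpha> \<beta> \<gamma> \<delta>) p p =
    univ_adj_matrix (del_vertex_V V v) (del_vertex_E E v) \<alpha> \<beta> \<gamma> \<delta>
    + mat (card V - 1) (card V - 1) (\<lambda>(k, l). if k = l \<and> E (vs' ! k) v then \<delta> else 0)"
proof -
  define vs where "vs = sorted_list_of_set V"
  have fin: "finite V" using G unfolding simple_graph_def by simp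
  have "v \<in> V" using p fin by (metis nth_mem set_sorted_list_of_set length_sorted_list_of_set)
  then have card': "card (del_vertex_V V v) = card V - 1"
    using fin unfolding del_vertex_V_def by (simp add: card_Diff_singleton_if)
  have vs: "distinct vs" "length vs = card V" unfolding vs_def by auto
  have vs'_nth: "vs' ! k = vs ! insert_index p k" if "k < card V - 1" for k
    using nth_remove1_nth[OF vs(1), of p k] vs p that
    unfolding vs'_def vs_def del_vertex_V_def sorted_list_of_set_remove[OF fin] by simp
  have vs'_ne: "vs' ! k \<noteq> v" if "k < card V - 1" for k
    using nth_mem[of k vs'] that card' fin unfolding vs'_def del_vertex_V_def by simp
  have ins: "insert_index p k < card V" "insert_index p k = insert_index p l \<longleftrightarrow> k = l"
    if "k < card V - 1" for k l
    using that by (auto simp: insert_index_def)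
  let ?M' = "univ_adj_matrix (del_vertex_V V v) (del_vertex_E E v) \<alpha> \<beta> \<gamma> \<delta>"
  let ?D = "mat (card V - 1) (card V - 1) (\<lambda>(k, l). if k = l \<and> E (vs' ! k) v then \<delta> else 0)"
  show ?thesis
  proof (rule eq_matI)
    fix k l assume "k < dim_row (?M' + ?D)" and "l < dim_col (?M' + ?D)"
    then have k: "k < card V - 1" and l: "l < card V - 1" by auto
    have "mat_delete (univ_adj_matrix V E \<alpha> \<beta> \<gamma> \<delta>) p p $$ (k, l)
        = univ_adj_matrix V E \<alpha> \<beta> \<gamma> \<delta> $$ (insert_index p k, insert_index p l)"
      using k l unfolding mat_delete_def insert_index_def by simp
    also have "\<dots> = \<alpha> * (if E (vs ! insert_index p k) (vs ! insert_index p l) then 1 else 0)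
        + \<beta> * (if insert_index p k = insert_index p l then 1 else 0) + \<gamma>
        + \<delta> * (if insert_index p k = insert_index p l
                then real (degree V E (vs ! insert_index p k)) else 0)"
      using univ_adj_matrix_index[OF ins(1)[OF k] ins(1)[OF l]] unfolding vs_def .
    also have "\<dots> = \<alpha> * (if E (vs' ! k) (vs' ! l) then 1 else 0) + \<beta> * (if k = l then 1 else 0) + \<gamma>
        + \<delta> * (if k = l then real (degree V E (vs' ! k)) else 0)"
      using ins(2)[OF k, of l] by (simp add: vs'_nth[OF k] vs'_nth[OF l])
    also have "\<dots> = (?M' + ?D) $$ (k, l)"
      using k l card' vs'_ne[OF k] vs'_ne[OF l] degree_del_vertex[OF G vs'_ne[OF k]]
      by (auto simp: univ_adj_matrix_index vs'_def del_vertex_E_def algebra_simps)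
    finally show "mat_delete (univ_adj_matrix V E \<alpha> \<beta> \<gamma> \<delta>) p p $$ (k, l) = (?M' + ?D) $$ (k, l)" .
  qed (simp_all add: card')
qed

lemma rank_univ_adj_matrix_del_vertex:
  fixes V :: "'a::linorder set" and \<alpha> \<beta> \<gamma> \<delta> :: real
  assumes G: "simple_graph V E" and v: "v \<in> V"
  defines "M \<equiv> univ_adj_matrix V E \<alpha> \<beta> \<gamma> \<delta>"
    and "M' \<equiv> univ_adj_matrix (del_vertex_V V v) (del_vertex_E E v) \<alpha> \<beta> \<gamma> \<delta>"
  shows "vec_space.rank (card (del_vertex_V V v)) M' \<le> vec_space.rank (card V) M + degree V E v"
    and "vec_space.rank (card V) M \<le> vec_space.rank (card (del_vertex_V V v)) M' + degree V E v + 2"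
proof -
  define n where "n = card V"
  define vs' where "vs' = sorted_list_of_set (del_vertex_V V v)"
  define N where "N c = mat (n - 1) (n - 1) (\<lambda>(k, l). if k = l \<and> E (vs' ! k) v then c else 0)" for c :: real
  have fin: "finite V" using G unfolding simple_graph_def by simp
  have card': "card (del_vertex_V V v) = n - 1"
    using fin v unfolding n_def del_vertex_V_def by simp
  obtain p where p: "p < n" "sorted_list_of_set V ! p = v"
    using v fin unfolding n_def by (metis in_set_conv_nth set_sorted_list_of_set length_sorted_list_of_set)
  have M: "M \<in> carrier_mat n n" and M': "M' \<in> carrier_mat (n - 1) (n - 1)"
    and N: "N c \<in> carrier_mat (n - 1) (n - 1)" for c
    unfolding M_def M'_def N_def n_def card'[unfolded n_def, symmetric] by (auto intro: carrier_matI)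
  have Del: "mat_delete M p p \<in> carrier_mat (n - 1) (n - 1)" using mat_delete_carrier[OF M] .
  have del: "mat_delete M p p = M' + N \<delta>"
    using mat_delete_univ_adj_matrix[OF G p[unfolded n_def]]
    unfolding M_def M'_def N_def vs'_def n_def .
  have M'_del: "M' = mat_delete M p p + N (- \<delta>)"
    unfolding del using M' by (auto simp: N_def intro!: eq_matI)
  have rank_N: "vec_space.rank (n - 1) (N c) \<le> degree V E v" for c
  proof -
    let ?S = "{k. k < n - 1 \<and> E (vs' ! k) v}"
    have vs': "distinct vs'" "length vs' = n - 1" "set vs' \<subseteq> V"
      using fin card' unfolding vs'_def del_vertex_V_def by auto
    have "inj_on (nth vs') ?S" using vs' by (auto simp: inj_on_def nth_eq_iff_index_eq)
    moreover have "nth vs' ` ?S \<subseteq> {u \<in> V. E v u}"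
      using vs' G unfolding simple_graph_def by auto
    ultimately have "card ?S \<le> degree V E v"
      unfolding degree_def using card_inj_on_le fin by (metis (no_types, lifting) finite_subset mem_Collect_eq subsetI)
    moreover have "vec_space.rank (n - 1) (N c) \<le> card ?S"
      by (rule rank_le_card_nonzero_rows[OF _ N]) (auto simp: N_def)
    ultimately show ?thesis by linarith
  qed
  have "vec_space.rank (n - 1) M' \<le> vec_space.rank (n - 1) (mat_delete M p p) + vec_space.rank (n - 1) (N (- \<delta>))"
    unfolding M'_del by (rule vec_space.rank_subadditive[OF Del N])
  then show "vec_space.rank (card (del_vertex_V V v)) M' \<le> vec_space.rank (card V) M + degree V E v"
    using rank_mat_delete_le[OF M, of p p] rank_N[of "- \<delta>"] unfolding card' n_def by linarith
  have "vec_space.rank (n - 1) (mat_delete M p p) \<le> vec_space.rank (n - 1) M' + vec_space.rank (n - 1) (N \<delta>)"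
    unfolding del by (rule vec_space.rank_subadditive[OF M' N])
  then show "vec_space.rank (card V) M \<le> vec_space.rank (card (del_vertex_V V v)) M' + degree V E v + 2"
    using rank_le_rank_mat_delete_add_2[OF M p(1) p(1)] rank_N[of \<delta>] unfolding card' n_def by linarith
qed

lemma finite_univ_adj_ranks:
  "finite {vec_space.rank (card V) (univ_adj_matrix V E \<alpha> \<beta> \<gamma> \<delta>) | \<alpha> \<beta> \<gamma> \<delta>. \<alpha> \<noteq> 0}"
  by (rule finite_subset[of _ "{..card V}"])
    (auto simp: vec_space.rank_le_nc[OF univ_adj_matrix_carrier])

lemma mur_le_rank:
  assumes "\<alpha> \<noteq> 0"
  shows "mur V E \<le> vec_space.rank (card V) (univ_adj_matrix V E \<alpha> \<beta> \<gamma> \<delta>)"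
  unfolding mur_def by (rule Min_le[OF finite_univ_adj_ranks]) (use assms in blast)

lemma mur_attained:
  obtains \<alpha> \<beta> \<gamma> \<delta> where "\<alpha> \<noteq> 0" and "mur V E = vec_space.rank (card V) (univ_adj_matrix V E \<alpha> \<beta> \<gamma> \<delta>)"
proof -
  have "mur V E \<in> {vec_space.rank (card V) (univ_adj_matrix V E \<alpha> \<beta> \<gamma> \<delta>) | \<alpha> \<beta> \<gamma> \<delta>. \<alpha> \<noteq> 0}"
    unfolding mur_def by (rule Min_in[OF finite_univ_adj_ranks]) (use one_neq_zero in blast)
  then show thesis using that by blast
qed

theorem theorem17:
  fixes V :: "'a::linorder set" and E :: "'a \<Rightarrow> 'a \<Rightarrow> bool" and v :: 'a and d :: nat
  assumes "simple_graph V E" and "v \<in> V" and "d = degree V E v"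
  shows "- int d \<le> int (mur V E) - int (mur (del_vertex_V V v) (del_vertex_E E v))
       \<and> int (mur V E) - int (mur (del_vertex_V V v) (del_vertex_E E v)) \<le> int d + 2"
proof
  obtain \<alpha> \<beta> \<gamma> \<delta> where "\<alpha> \<noteq> 0" and "mur V E = vec_space.rank (card V) (univ_adj_matrix V E \<alpha> \<beta> \<gamma> \<delta>)"
    by (rule mur_attained)
  then have "mur (del_vertex_V V v) (del_vertex_E E v) \<le> mur V E + d"
    using mur_le_rank[of \<alpha> "del_vertex_V V v" "del_vertex_E E v" \<beta> \<gamma> \<delta>]
      rank_univ_adj_matrix_del_vertex(1)[OF assms(1,2), of \<alpha> \<beta> \<gamma> \<delta>] assms(3) by linarith
  then show "- int d \<le> int (mur V E) - int (mur (del_vertex_V V v) (del_vertex_E E v))" by linarith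
next
  obtain \<alpha> \<beta> \<gamma> \<delta> where "\<alpha> \<noteq> 0" and "mur (del_vertex_V V v) (del_vertex_E E v) =
      vec_space.rank (card (del_vertex_V V v)) (univ_adj_matrix (del_vertex_V V v) (del_vertex_E E v) \<alpha> \<beta> \<gamma> \<delta>)"
    by (rule mur_attained)
  then have "mur V E \<le> mur (del_vertex_V V v) (del_vertex_E E v) + d + 2"
    using mur_le_rank[of \<alpha> V E \<beta> \<gamma> \<delta>]
      rank_univ_adj_matrix_del_vertex(2)[OF assms(1,2), of \<alpha> \<beta> \<gamma> \<delta>] assms(3) by linarith
  then show "int (mur V E) - int (mur (del_vertex_V V v) (del_vertex_E E v)) \<le> int d + 2" by linarith
qed

end
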